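(* Let $\phi:M_m\to M_n$ be a positive linear map. Then the dual face $L_\phi'$ meets the interior of the cone $\mathbb T$ if and only if both the product vectors in $P_\phi$ and their partial conjugates span the whole space $\mathbb C^n\otimes\mathbb C^m$. If moreover $\phi$ is exposed, then this is the case if and only if $\phi$ is indecomposable.
   Context: $M_k$ is the algebra of $k\times k$ complex matrices, $M_k^+$ its positive semi-definite cone, and $\mathbb V_1=M_n^+\otimes M_m^+\subset M_n\otimes M_m$ the separable cone. Pairing: $\langle y\otimes x,\phi\rangle=\mathrm{Tr}(\phi(x)y^{\mathrm t})$ for $x\in M_m,y\in M_n,\phi:M_m\to M_n$ linear, extended bilinearly. $\mathbb P_1$ is the cone of positive linear maps $M_m\to M_n$. $L_\phi=\{\lambda\phi:\lambda\ge0\}$ and $L_\phi'=\{A\in\mathbb V_1:\langle A,\phi\rangle=0\}$; for a face $G$ of $\mathbb V_1$, $G'=\{\psi\in\mathbb P_1:\langle A,\psi\rangle=0\ \forall A\in G\}$; $\phi$ is exposed if $L_\phi=L_\phi''$. $P_\phi$ is the set of product vectors $\bar y\otimes x\in\mathbb C^n\otimes\mathbb C^m$ ($x\in\mathbb C^m$, $y\in\mathbb C^n$) with $(\phi(xx^* )y\,|\,y)=0$, equivalently $\langle(\bar y\otimes x)(\bar y\otimes x)^*,\phi\rangle=0$; the partial conjugate of $\bar y\otimes x$ is $\bar y\otimes\bar x$. $\mathbb T$ is the cone of positive semi-definite $A\in M_n\otimes M_m$ whose partial transpose $A^\tau$ is also positive semi-definite; its interior (relative to its affine hull) consists of those $A\in\mathbb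 T$ for which both $A$ and $A^\tau$ have full range. A positive map is decomposable if it is a sum of maps $X\mapsto V^*XV$ and $X\mapsto W^*X^{\mathrm t}W$ ($V,W$ $m\times n$ matrices), and indecomposable otherwise. *)

theory Defs
  imports "HOL-Analysis.Analysis"
begin

text \<open>Index types 'm and 'n (finite) play the role of {1..m} and {1..n}.
  C^m = complex^'m; M_m = complex^'m^'m (row-indexed: A$i$j is entry (i,j)).
  C^n (x) C^m = complex^('n \<times> 'm), with (y (x) x)$(i,k) = y$i * x$k.
  M_n (x) M_m = complex^('n \<times> 'm)^('n \<times> 'm), with
  (Y (x) X)$(i,k)$(j,l) = Y$i$j * X$k$l (Kronecker product).\<close>

definition cadj :: "complex^'b::finite^'a::finite \<Rightarrow> complex^'a::finite^'b::finite" where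
  "cadj A = (\<chi> i j. cnj (A $ j $ i))"

definition mscale :: "complex \<Rightarrow> complex^'b::finite^'a::finite \<Rightarrow> complex^'b::finite^'a::finite" where
  "mscale c A = (\<chi> i j. c * A $ i $ j)"

definition cip :: "complex^'a::finite \<Rightarrow> complex^'a::finite \<Rightarrow> complex" where
  "cip u v = (\<Sum>i\<in>UNIV. u $ i * cnj (v $ i))"

definition psd :: "complex^'a::finite^'a::finite \<Rightarrow> bool" where
  "psd A \<longleftrightarrow> (\<forall>x. Im (cip (A *v x) x) = 0 \<and> 0 \<le> Re (cip (A *v x) x))"

definition full_range :: "complex^'a::finite^'a::finite \<Rightarrow> bool" where
  "full_range A \<longleftrightarrow> range ((*v) A) = UNIV"

definition vouter :: "complex^'a::finite \<Rightarrow> complex^'a::finite^'a::finite" where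
  "vouter x = (\<chi> i j. x $ i * cnj (x $ j))"

definition mat_unit :: "'a::finite \<Rightarrow> 'a::finite \<Rightarrow> complex^'a::finite^'a::finite" where
  "mat_unit k l = (\<chi> i j. if i = k \<and> j = l then 1 else 0)"

definition cconj_vec :: "complex^'a::finite \<Rightarrow> complex^'a::finite" where
  "cconj_vec x = (\<chi> i. cnj (x $ i))"

definition vtens :: "complex^'n::finite \<Rightarrow> complex^'m::finite \<Rightarrow> complex^('n::finite \<times> 'm::finite)" where
  "vtens y x = (\<chi> p. y $ fst p * x $ snd p)"

definition mtens :: "complex^'n::finite^'n::finite \<Rightarrow> complex^'m::finite^'m::finite \<Rightarrow> complex^('n::finite \<times> 'm::finite)^('n::finite \<times> 'm::finite)" where
  "mtens Y X = (\<chi> p q. Y $ fst p $ fst q * X $ snd p $ snd q)"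

definition ptrans :: "complex^('n::finite \<times> 'm::finite)^('n::finite \<times> 'm::finite) \<Rightarrow> complex^('n::finite \<times> 'm::finite)^('n::finite \<times> 'm::finite)" where
  "ptrans A = (\<chi> p q. A $ (fst q, snd p) $ (fst p, snd q))"

definition clinear_map :: "(complex^'m::finite^'m::finite \<Rightarrow> complex^'n::finite^'n::finite) \<Rightarrow> bool" where
  "clinear_map \<phi> \<longleftrightarrow> (\<forall>X Y. \<phi> (X + Y) = \<phi> X + \<phi> Y) \<and> (\<forall>c X. \<phi> (mscale c X) = mscale c (\<phi> X))"

definition positive_map :: "(complex^'m::finite^'m::finite \<Rightarrow> complex^'n::finite^'n::finite) \<Rightarrow> bool" where
  "positive_map \<phi> \<longleftrightarrow> clinear_map \<phi> \<and> (\<forall>X. psd X \<longrightarrow> psd (\<phi> X))"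

text \<open>The pairing <A, phi>, the bilinear extension of <y (x) x, phi> = Tr(phi(x) y^t),
  written out via matrix units.\<close>
definition pairing :: "complex^('n::finite \<times> 'm::finite)^('n::finite \<times> 'm::finite) \<Rightarrow> (complex^'m::finite^'m::finite \<Rightarrow> complex^'n::finite^'n::finite) \<Rightarrow> complex" where
  "pairing A \<phi> = (\<Sum>i\<in>UNIV. \<Sum>j\<in>UNIV. \<Sum>k\<in>UNIV. \<Sum>l\<in>UNIV.
      A $ (i,k) $ (j,l) * \<phi> (mat_unit k l) $ i $ j)"

definition sep_cone :: "(complex^('n::finite \<times> 'm::finite)^('n::finite \<times> 'm::finite)) set" where
  "sep_cone = {A. \<exists>(r::nat) Y X. (\<forall>p<r. psd (Y p) \<and> psd (X p)) \<and> A = (\<Sum>p<r. mtens (Y p) (X p))}"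

text \<open>The cone T of PPT matrices and its (relative) interior.\<close>
definition ppt_cone :: "(complex^('n::finite \<times> 'm::finite)^('n::finite \<times> 'm::finite)) set" where
  "ppt_cone = {A. psd A \<and> psd (ptrans A)}"

definition ppt_interior :: "(complex^('n::finite \<times> 'm::finite)^('n::finite \<times> 'm::finite)) set" where
  "ppt_interior = {A. A \<in> ppt_cone \<and> full_range A \<and> full_range (ptrans A)}"

definition dual_face :: "(complex^'m::finite^'m::finite \<Rightarrow> complex^'n::finite^'n::finite) \<Rightarrow> (complex^('n::finite \<times> 'm::finite)^('n::finite \<times> 'm::finite)) set" where
  "dual_face \<phi> = {A \<in> sep_cone. pairing A \<phi> = 0}"

definition dual_face_maps :: "(complex^('n::finite \<times> 'm::finite)^('n::finite \<times> 'm::finite)) set \<Rightarrow> (complex^'m::finite^'m::finite \<Rightarrow> complex^'n::finite^'n::finite) set" where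
  "dual_face_maps G = {\<psi>. positive_map \<psi> \<and> (\<forall>A\<in>G. pairing A \<psi> = 0)}"

definition ray :: "(complex^'m::finite^'m::finite \<Rightarrow> complex^'n::finite^'n::finite) \<Rightarrow> (complex^'m::finite^'m::finite \<Rightarrow> complex^'n::finite^'n::finite) set" where
  "ray \<phi> = {(\<lambda>X. mscale (complex_of_real t) (\<phi> X)) | t. t \<ge> 0}"

definition exposed :: "(complex^'m::finite^'m::finite \<Rightarrow> complex^'n::finite^'n::finite) \<Rightarrow> bool" where
  "exposed \<phi> \<longleftrightarrow> ray \<phi> = dual_face_maps (dual_face \<phi>)"

definition prod_vecs :: "(complex^'m::finite^'m::finite \<Rightarrow> complex^'n::finite^'n::finite) \<Rightarrow> (complex^('n::finite \<times> 'm::finite)) set" where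
  "prod_vecs \<phi> = {vtens (cconj_vec y) x | x y. cip (\<phi> (vouter x) *v y) y = 0}"

definition prod_vecs_pconj :: "(complex^'m::finite^'m::finite \<Rightarrow> complex^'n::finite^'n::finite) \<Rightarrow> (complex^('n::finite \<times> 'm::finite)) set" where
  "prod_vecs_pconj \<phi> = {vtens (cconj_vec y) (cconj_vec x) | x y. cip (\<phi> (vouter x) *v y) y = 0}"

definition decomposable :: "(complex^'m::finite^'m::finite \<Rightarrow> complex^'n::finite^'n::finite) \<Rightarrow> bool" where
  "decomposable \<phi> \<longleftrightarrow> (\<exists>(r::nat) (s::nat) (V :: nat \<Rightarrow> complex^'n::finite^'m::finite) (W :: nat \<Rightarrow> complex^'n::finite^'m::finite).
     \<phi> = (\<lambda>X. (\<Sum>p<r. cadj (V p) ** X ** V p) + (\<Sum>q<s. cadj (W q) ** transpose X ** W q)))"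

end

theory Submission
  imports Defs "HOL-Library.Complex_Order"
begin

text \<open>A positive semi-definite matrix is a finite sum of rank-one matrices \<open>w w\<^sup>*\<close> (split off one
  column at a time by a Schur complement). Hence a separable \<open>A\<close> is a sum of \<open>u u\<^sup>*\<close> over product
  vectors \<open>u = conj y \<otimes> x\<close>, and \<open>A\<^sup>\<tau>\<close> is the sum of \<open>v v\<^sup>*\<close> over the complex conjugates \<open>v\<close> of their
  partial conjugates. As \<open>\<phi>\<close> is positive, \<open>\<langle>A, \<phi>\<rangle> = 0\<close> exactly when every such \<open>u\<close> lies in
  \<open>P\<^sub>\<phi>\<close>, and a sum of rank-one matrices has full range exactly when its vectors span.

  Pairing \<open>A\<close> with \<open>X \<mapsto> V\<^sup>* X V\<close> gives \<open>(A v | v)\<close> and with \<open>X \<mapsto> W\<^sup>* X\<^sup>t W\<close> gives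
  \<open>(A\<^sup>\<tau> conj w | conj w)\<close>, where \<open>v, w\<close> are \<open>V, W\<close> reshaped as vectors. If \<open>A\<close> is in the dual face
  and in the interior of the PPT cone, these terms vanish for all summands of a decomposable \<open>\<phi>\<close>,
  and full range forces every \<open>V, W\<close> to be \<open>0\<close>. Conversely, a nonzero \<open>z\<close> orthogonal to \<open>P\<^sub>\<phi>\<close> (or
  to its partial conjugates) defines such a map that vanishes on the dual face; exposedness makes
  it a positive multiple of \<open>\<phi>\<close>, so \<open>\<phi>\<close> is decomposable.\<close>

section \<open>Inner products and complex conjugation\<close>

lemma cip_add_left: "cip (u + v) w = cip u w + cip v w"
  by (simp add: cip_def sum.distrib algebra_simps)

lemma cip_add_right: "cip w (u + v) = cip w u + cip w v"
  by (simp add: cip_def sum.distrib algebra_simps)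

lemma cip_scale_left: "cip (c *s u) w = c * cip u w"
  by (simp add: cip_def sum_distrib_left algebra_simps)

lemma cip_scale_right: "cip u (c *s w) = cnj c * cip u w"
  by (simp add: cip_def sum_distrib_left algebra_simps)

lemma cip_zero_left [simp]: "cip 0 w = 0"
  by (simp add: cip_def)

lemma cnj_cip: "cnj (cip u v) = cip v u"
  by (simp add: cip_def mult.commute)

lemma cip_self_eq_0_iff: "cip z z = 0 \<longleftrightarrow> z = 0"
proof
  assume "cip z z = 0"
  then have "complex_of_real (\<Sum>i\<in>UNIV. (cmod (z $ i))\<^sup>2) = 0"
    unfolding cip_def of_real_sum complex_norm_square .
  then have "\<forall>i. (cmod (z $ i))\<^sup>2 = 0"
    by (subst (asm) of_real_eq_0_iff, subst (asm) sum_nonneg_eq_0_iff) auto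
  then show "z = 0" by (simp add: vec_eq_iff)
qed simp

lemma cip_axis_right: "cip u (axis i 1) = u $ i"
proof -
  have "cip u (axis i 1) = (\<Sum>j\<in>UNIV. if j = i then u $ j else 0)"
    unfolding cip_def axis_def by (rule sum.cong) auto
  then show ?thesis by simp
qed

lemma cip_axis_left: "cip (axis i 1) u = cnj (u $ i)"
  by (metis cip_axis_right cnj_cip)

lemma cip_cconj_vec: "cip (cconj_vec u) (cconj_vec v) = cip v u"
  by (simp add: cip_def cconj_vec_def mult.commute)

lemma cconj_vec_cconj_vec [simp]: "cconj_vec (cconj_vec x) = x"
  by (simp add: vec_eq_iff cconj_vec_def)

lemma cconj_vec_zero [simp]: "cconj_vec 0 = 0"
  by (simp add: vec_eq_iff cconj_vec_def)

lemma cconj_vec_eq_0_iff [simp]: "cconj_vec x = 0 \<longleftrightarrow> x = 0"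
  by (simp add: vec_eq_iff cconj_vec_def)

lemma cip_span_eq_0:
  assumes "\<And>u. u \<in> S \<Longrightarrow> cip u z = 0" and "u \<in> vec.span S"
  shows "cip u z = 0"
proof -
  have "vec.subspace {u. cip u z = 0}"
    by (auto simp: vec.subspace_def cip_add_left cip_scale_left)
  then show ?thesis
    using vec.span_minimal[of S "{u. cip u z = 0}"] assms by blast
qed

lemma orthogonal_to_spanning_eq_0:
  assumes "vec.span S = UNIV" and "\<And>u. u \<in> S \<Longrightarrow> cip u z = 0"
  shows "z = 0"
  using cip_span_eq_0[of S z z] assms by (simp add: cip_self_eq_0_iff)

lemma cconj_vec_add: "cconj_vec (u + v) = cconj_vec u + cconj_vec v"
  by (simp add: vec_eq_iff cconj_vec_def)

lemma cconj_vec_scale: "cconj_vec (c *s u) = cnj c *s cconj_vec u"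
  by (simp add: vec_eq_iff cconj_vec_def)

lemma cconj_vec_span: "cconj_vec ` vec.span S \<subseteq> vec.span (cconj_vec ` S)"
proof -
  have "vec.subspace {v. cconj_vec v \<in> vec.span (cconj_vec ` S)}"
    by (auto simp: vec.subspace_def cconj_vec_add cconj_vec_scale
        vec.span_zero vec.span_add vec.span_scale)
  then have "vec.span S \<subseteq> {v. cconj_vec v \<in> vec.span (cconj_vec ` S)}"
    by (rule vec.span_minimal[rotated]) (auto intro: vec.span_base)
  then show ?thesis by blast
qed

lemma span_cconj_vec_eq_UNIV_iff:
  "vec.span (cconj_vec ` S) = UNIV \<longleftrightarrow> vec.span S = UNIV"
proof
  assume "vec.span (cconj_vec ` S) = UNIV"
  then have "cconj_vec ` UNIV \<subseteq> vec.span (cconj_vec ` cconj_vec ` S)"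
    using cconj_vec_span[of "cconj_vec ` S"] by simp
  then show "vec.span S = UNIV"
    by (auto simp: image_image) (metis UNIV_I cconj_vec_cconj_vec image_eqI subsetD)
next
  assume "vec.span S = UNIV"
  then show "vec.span (cconj_vec ` S) = UNIV"
    using cconj_vec_span[of S] by (auto simp: image_image) (metis UNIV_I cconj_vec_cconj_vec image_eqI subsetD)
qed

section \<open>Sums of rank-one matrices\<close>

definition outer_sum :: "(complex^'a::finite) list \<Rightarrow> complex^'a^'a" where
  "outer_sum ws = sum_list (map vouter ws)"

lemma outer_sum_Nil [simp]: "outer_sum [] = 0"
  by (simp add: outer_sum_def)

lemma outer_sum_Cons [simp]: "outer_sum (w # ws) = vouter w + outer_sum ws"
  by (simp add: outer_sum_def)

lemma outer_sum_append: "outer_sum (ws @ vs) = outer_sum ws + outer_sum vs"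
  by (simp add: outer_sum_def)

lemma vouter_mult_vec: "vouter w *v z = cip z w *s w"
  by (simp add: vec_eq_iff vouter_def matrix_vector_mult_def cip_def sum_distrib_left algebra_simps)

lemma outer_sum_mult_vec: "outer_sum ws *v z = (\<Sum>w\<leftarrow>ws. cip z w *s w)"
  by (induction ws) (simp_all add: matrix_vector_mult_add_rdistrib vouter_mult_vec)

lemma outer_sum_form: "cip (outer_sum ws *v z) z = of_real (\<Sum>w\<leftarrow>ws. (cmod (cip z w))\<^sup>2)"
proof (induction ws)
  case (Cons w ws)
  have "cip (vouter w *v z) z = cip z w * cnj (cip z w)"
    by (simp add: vouter_mult_vec cip_scale_left cnj_cip)
  with Cons show ?case
    by (simp add: matrix_vector_mult_add_rdistrib cip_add_left complex_norm_square[symmetric])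
qed simp

lemma outer_sum_form_eq_0_iff:
  "cip (outer_sum ws *v z) z = 0 \<longleftrightarrow> (\<forall>w\<in>set ws. cip z w = 0)"
  unfolding outer_sum_form of_real_eq_0_iff
  by (subst sum_list_nonneg_eq_0_iff) auto

lemma vouter_form_self_neq_0: "z \<noteq> 0 \<Longrightarrow> cip (vouter z *v z) z \<noteq> 0"
  using outer_sum_form_eq_0_iff[of "[z]" z] by (simp add: cip_self_eq_0_iff)

lemma psd_outer_sum: "psd (outer_sum ws)"
  unfolding psd_def outer_sum_form by (auto intro!: sum_list_nonneg)

lemma psd_vouter: "psd (vouter w)"
  using psd_outer_sum[of "[w]"] by simp

lemma outer_sum_mult_vec_in_span: "outer_sum ws *v z \<in> vec.span (set ws)"
  unfolding outer_sum_mult_vec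
proof (induction ws)
  case (Cons w ws)
  then have "(\<Sum>w\<leftarrow>ws. cip z w *s w) \<in> vec.span (set (w # ws))"
    using vec.span_mono[of "set ws" "set (w # ws)"] by auto
  then show ?case
    by (simp add: vec.span_add vec.span_scale vec.span_base)
qed (simp add: vec.span_zero)

lemma full_range_imp_kernel_eq_0:
  assumes "full_range (A::complex^'a::finite^'a)" and "A *v z = 0"
  shows "z = 0"
proof -
  have "inj ((*v) A)"
    using vec.linear_surj_imp_inj[OF matrix_vector_mul_linear_gen] assms(1)
    unfolding full_range_def by blast
  then show ?thesis
    using assms(2) by (metis injD matrix_vector_mult_0_right)
qed

lemma full_rangeI:
  assumes "\<And>z. (A::complex^'a::finite^'a) *v z = 0 \<Longrightarrow> z = 0"
  shows "full_range A"
proof -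
  have "inj ((*v) A)"
  proof (rule injI)
    fix x y assume "A *v x = A *v y"
    then have "A *v (x - y) = 0"
      by (simp add: matrix_vector_mult_diff_distrib)
    then show "x = y"
      using assms by force
  qed
  then show ?thesis
    using vec.linear_inj_imp_surj[OF matrix_vector_mul_linear_gen] unfolding full_range_def by blast
qed

lemma full_range_outer_sum_iff: "full_range (outer_sum ws) \<longleftrightarrow> vec.span (set ws) = UNIV"
proof
  assume full: "full_range (outer_sum ws)"
  have "v \<in> vec.span (set ws)" for v
  proof -
    obtain z where "v = outer_sum ws *v z"
      using full unfolding full_range_def by (metis UNIV_I imageE)
    then show ?thesis
      by (simp add: outer_sum_mult_vec_in_span)
  qed
  then show "vec.span (set ws) = UNIV"
    by auto
next
  assume span: "vec.span (set ws) = UNIV"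
  show "full_range (outer_sum ws)"
  proof (rule full_rangeI)
    fix z assume "outer_sum ws *v z = 0"
    then have "cip z w = 0" if "w \<in> set ws" for w
      using outer_sum_form_eq_0_iff[of ws z] that by simp
    then have "cip w z = 0" if "w \<in> set ws" for w
      using that cnj_cip[of z w] by simp
    then show "z = 0"
      by (rule orthogonal_to_spanning_eq_0[OF span])
  qed
qed

lemma finite_spanning_subimage:
  obtains C where "finite C" "C \<subseteq> Z" "vec.span (f ` C) = vec.span (f ` Z)"
proof -
  obtain B where B: "B \<subseteq> f ` Z" "vec.independent B" "f ` Z \<subseteq> vec.span B"
    using vec.maximal_independent_subset by blast
  obtain C where C: "C \<subseteq> Z" "finite C" "B = f ` C"
    using finite_subset_image[OF vec.finiteI_independent[OF B(2)] B(1)] by blast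
  have "vec.span B = vec.span (f ` Z)"
    using B(1,3) vec.span_superset[of "f ` Z"] unfolding vec.span_eq by blast
  with C show ?thesis
    using that by blast
qed

lemma orthogonal_vector_exists:
  fixes S :: "(complex^'a::finite) set"
  assumes "vec.span S \<noteq> UNIV"
  obtains z where "z \<noteq> 0" "\<And>u. u \<in> S \<Longrightarrow> cip u z = 0"
proof -
  obtain B where B: "finite B" "B \<subseteq> S" "vec.span B = vec.span S"
    using finite_spanning_subimage[of S id] by auto
  then obtain ws where ws: "set ws = B"
    using finite_list by blast
  have "\<not> full_range (outer_sum ws)"
    using assms B(3) by (simp add: full_range_outer_sum_iff ws)
  then obtain z where z: "outer_sum ws *v z = 0" "z \<noteq> 0"
    using full_rangeI by blast
  then have "\<forall>w\<in>B. cip w z = 0"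
    using outer_sum_form_eq_0_iff[of ws z] ws by (metis cip_zero_left cnj_cip complex_cnj_zero)
  then have "\<forall>u\<in>S. cip u z = 0"
    using cip_span_eq_0[of B z] B(3) vec.span_base by blast
  then show ?thesis
    using that z(2) by blast
qed

section \<open>Positive semi-definite matrices\<close>

lemma cip_form_axis_pair:
  fixes A :: "complex^'a::finite^'a"
  shows "cip (A *v (axis i 1 + t *s axis j 1)) (axis i 1 + t *s axis j 1) =
    A$i$i + cnj t * A$j$i + t * A$i$j + t * cnj t * A$j$j"
proof -
  have "cip (A *v axis q 1) (axis p 1) = A $ p $ q" for p q
    unfolding cip_axis_right by (simp add: matrix_vector_mult_def axis_def if_distrib cong: if_cong)
  then show ?thesis
    by (simp add: matrix_vector_right_distrib vector_scalar_commute cip_add_left cip_add_right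
        cip_scale_left cip_scale_right algebra_simps)
qed

lemma psd_diag:
  assumes "psd (A::complex^'a::finite^'a)"
  shows "A$i$i = of_real (Re (A$i$i))" "0 \<le> Re (A$i$i)"
  using assms[unfolded psd_def, rule_format, of "axis i 1"] cip_form_axis_pair[of A i 0 i]
  by (auto simp: complex_eq_iff)

lemma psd_hermitian:
  assumes "psd (A::complex^'a::finite^'a)"
  shows "A$j$i = cnj (A$i$j)"
proof -
  have q: "Im (A$i$i + cnj t * A$j$i + t * A$i$j + t * cnj t * A$j$j) = 0" for t
    using assms[unfolded psd_def, rule_format, of "axis i 1 + t *s axis j 1"]
    by (simp add: cip_form_axis_pair)
  have "Im (A$i$i) = 0" "Im (A$j$j) = 0"
    using psd_diag(1)[OF assms] by (metis Im_complex_of_real)+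
  with q[of 1] q[of \<i>] show ?thesis
    by (simp add: complex_eq_iff)
qed

text \<open>Test the form on \<open>e\<^sub>k - s cnj(A\<^sub>k\<^sub>j) e\<^sub>j\<close> for small \<open>s > 0\<close>.\<close>
lemma psd_zero_diag_row:
  assumes psd: "psd (A::complex^'a::finite^'a)" and "A$k$k = 0"
  shows "A$k$j = 0"
proof -
  define c where "c = A$k$j"
  define d where "d = Re (A$j$j)"
  define s where "s = 1 / (d + 1)"
  define n where "n = (cmod c)\<^sup>2"
  have "0 \<le> d" "A$j$j = of_real d"
    using psd_diag[OF psd, of j] d_def by auto
  then have s: "0 < s" "s * d < 1"
    unfolding s_def by (auto simp: field_simps)
  define t where "t = - (of_real s * cnj c)"
  have "A$j$k = cnj c"
    unfolding c_def by (rule psd_hermitian[OF psd])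
  then have "cip (A *v (axis k 1 + t *s axis j 1)) (axis k 1 + t *s axis j 1)
      = of_real (s * n * (s * d - 2))"
    unfolding cip_form_axis_pair
    using \<open>A$j$j = of_real d\<close> assms(2) complex_norm_square[of c]
    by (simp add: t_def c_def[symmetric] n_def algebra_simps)
  then have "0 \<le> s * n * (s * d - 2)"
    using psd[unfolded psd_def, rule_format, of "axis k 1 + t *s axis j 1"] by simp
  moreover have "0 \<le> n"
    by (simp add: n_def)
  ultimately have "n = 0"
    using s by (smt (verit) mult_pos_neg mult_pos_pos)
  then show ?thesis
    by (simp add: n_def c_def)
qed

text \<open>The form of \<open>A - w w\<^sup>*\<close> at \<open>x\<close> is the form of \<open>A\<close> at \<open>x - ((x|w) / \<surd>A\<^sub>k\<^sub>k) e\<^sub>k\<close>, a vector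
  orthogonal to \<open>w\<close>.\<close>
lemma psd_schur_complement:
  fixes A :: "complex^'a::finite^'a"
  assumes psd: "psd A" and r: "A$k$k = of_real r" "r > 0"
  defines "w \<equiv> (\<chi> i. A$i$k / of_real (sqrt r))"
  shows "psd (A - vouter w)"
    and "(A - vouter w)$i$j = A$i$j - A$i$k * A$k$j / of_real r"
proof -
  have sq: "of_real (sqrt r) * of_real (sqrt r) = (of_real r :: complex)"
    using r(2) by (simp flip: of_real_mult)
  have sqrt_nz: "sqrt r \<noteq> 0"
    using r(2) by simp
  show entry: "(A - vouter w)$i$j = A$i$j - A$i$k * A$k$j / of_real r" for i j
    using psd_hermitian[OF psd, of j k] sq unfolding w_def vouter_def by (simp add: field_simps)
  define B where "B = A - vouter w"
  show "psd (A - vouter w)"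
    unfolding psd_def B_def[symmetric]
  proof
    fix x
    define \<tau> where "\<tau> = - cip x w / of_real (sqrt r)"
    define x' where "x' = x + \<tau> *s axis k 1"
    have "w $ k = of_real (sqrt r)"
      unfolding w_def using sqrt_nz sq r(1) by (simp add: field_simps)
    then have x'w: "cip x' w = 0"
      unfolding x'_def cip_add_left cip_scale_left cip_axis_left using sqrt_nz by (simp add: \<tau>_def)
    have "B$i$k = 0" "B$k$i = 0" for i
      unfolding B_def entry using r by simp_all
    then have "B *v axis k 1 = 0" "cip (B *v x) (axis k 1) = 0"
      unfolding cip_axis_right
      by (simp_all add: vec_eq_iff matrix_vector_mult_def axis_def if_distrib cong: if_cong)
    then have "cip (B *v x) x = cip (B *v x') x'"
      unfolding x'_def
      by (simp add: matrix_vector_right_distrib vector_scalar_commute cip_add_right cip_scale_right)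
    also have "\<dots> = cip (A *v x') x'"
      unfolding B_def matrix_vector_mult_diff_rdistrib vouter_mult_vec x'w by simp
    finally show "Im (cip (B *v x) x) = 0 \<and> 0 \<le> Re (cip (B *v x) x)"
      using psd unfolding psd_def by simp
  qed
qed

lemma psd_supported_eq_outer_sum:
  assumes "finite S" "psd (A::complex^'a::finite^'a)"
    and "\<And>i j. A$i$j \<noteq> 0 \<Longrightarrow> i \<in> S \<and> j \<in> S"
  shows "\<exists>ws. A = outer_sum ws"
  using assms
proof (induction S arbitrary: A rule: finite_induct)
  case empty
  then have "A = outer_sum []"
    by (auto simp: vec_eq_iff)
  then show ?case ..
next
  case (insert k S)
  show ?case
  proof (cases "A$k$k = 0")
    case True
    then have "A$k$j = 0" "A$j$k = 0" for j
      using psd_zero_diag_row[OF insert.prems(1)] psd_hermitian[OF insert.prems(1), of j k] by auto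
    then show ?thesis
      using insert.IH[OF insert.prems(1)] insert.prems(2) by blast
  next
    case False
    define r where "r = Re (A$k$k)"
    have r: "A$k$k = of_real r" "r > 0"
      using psd_diag[OF insert.prems(1), of k] False unfolding r_def by (auto simp: less_le)
    define w :: "complex^'a" where "w = (\<chi> i. A$i$k / of_real (sqrt r))"
    note schur = psd_schur_complement[OF insert.prems(1) r, folded w_def]
    have "i \<in> S \<and> j \<in> S" if nz: "(A - vouter w)$i$j \<noteq> 0" for i j
    proof -
      have "i \<noteq> k" "j \<noteq> k"
        using nz r unfolding schur(2) by auto
      moreover have "i \<in> insert k S"
      proof (rule ccontr)
        assume "i \<notin> insert k S"
        then have "A$i$j = 0" "A$i$k = 0"
          using insert.prems(2) by blast+
        then show False
          using nz unfolding schur(2) by simp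
      qed
      moreover have "j \<in> insert k S"
      proof (rule ccontr)
        assume "j \<notin> insert k S"
        then have "A$i$j = 0" "A$k$j = 0"
          using insert.prems(2) by blast+
        then show False
          using nz unfolding schur(2) by simp
      qed
      ultimately show ?thesis
        by simp
    qed
    then obtain ws where "A - vouter w = outer_sum ws"
      using insert.IH[OF schur(1)] by blast
    then have "A = outer_sum (w # ws)"
      by (simp add: algebra_simps)
    then show ?thesis ..
  qed
qed

lemma psd_eq_outer_sum:
  assumes "psd (A::complex^'a::finite^'a)"
  obtains ws where "A = outer_sum ws"
  using psd_supported_eq_outer_sum[of UNIV A] assms by auto

lemma psd_form_eq_0_imp_kernel:
  assumes "psd A" and "cip (A *v z) z = 0"
  shows "A *v z = 0"
proof -
  obtain ws where A: "A = outer_sum ws"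
    using psd_eq_outer_sum[OF assms(1)] .
  then have "\<forall>w\<in>set ws. cip z w = 0"
    using assms(2) outer_sum_form_eq_0_iff by blast
  then show ?thesis
    unfolding A outer_sum_mult_vec by (induction ws) auto
qed

lemma psd_form_nonneg: "psd A \<Longrightarrow> 0 \<le> cip (A *v z) z"
  by (simp add: psd_def less_eq_complex_def)

lemma psd_transpose:
  assumes "psd (X::complex^'a::finite^'a)"
  shows "psd (transpose X)"
proof -
  have "cip (transpose X *v u) u = cip (X *v cconj_vec u) (cconj_vec u)" for u
  proof -
    have "cip (transpose X *v u) u = (\<Sum>i\<in>UNIV. \<Sum>j\<in>UNIV. X$j$i * u$j * cnj (u$i))"
      by (simp add: cip_def transpose_def matrix_vector_mult_def sum_distrib_right del: transpose_matrix_vector)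
    also have "\<dots> = (\<Sum>j\<in>UNIV. \<Sum>i\<in>UNIV. X$j$i * u$j * cnj (u$i))"
      by (rule sum.swap)
    also have "\<dots> = cip (X *v cconj_vec u) (cconj_vec u)"
      by (simp add: cip_def cconj_vec_def matrix_vector_mult_def sum_distrib_right sum_distrib_left ac_simps)
    finally show ?thesis .
  qed
  then show ?thesis
    using assms unfolding psd_def by simp
qed

section \<open>Separable matrices and the dual face\<close>

definition prod_vec :: "(complex^'m::finite) \<times> (complex^'n::finite) \<Rightarrow> complex^('n \<times> 'm)" where
  "prod_vec p = vtens (cconj_vec (snd p)) (fst p)"

definition pconj_vec :: "(complex^'m::finite) \<times> (complex^'n::finite) \<Rightarrow> complex^('n \<times> 'm)" where
  "pconj_vec p = vtens (cconj_vec (snd p)) (cconj_vec (fst p))"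

definition vanishing_pairs ::
    "(complex^'m::finite^'m \<Rightarrow> complex^'n::finite^'n) \<Rightarrow> ((complex^'m) \<times> (complex^'n)) set" where
  "vanishing_pairs \<phi> = {p. cip (\<phi> (vouter (fst p)) *v snd p) (snd p) = 0}"

lemma prod_vecs_eq_image: "prod_vecs \<phi> = prod_vec ` vanishing_pairs \<phi>"
  unfolding prod_vecs_def prod_vec_def vanishing_pairs_def image_def by auto

lemma prod_vecs_pconj_eq_image: "prod_vecs_pconj \<phi> = pconj_vec ` vanishing_pairs \<phi>"
  unfolding prod_vecs_pconj_def pconj_vec_def vanishing_pairs_def image_def by auto

lemma mtens_vouter: "mtens (vouter a) (vouter b) = vouter (vtens a b)"
  by (simp add: vec_eq_iff mtens_def vouter_def vtens_def ac_simps)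

lemma mtens_outer_sum:
  "mtens (outer_sum ws) (outer_sum xs) = outer_sum (map prod_vec [(x, cconj_vec w). w \<leftarrow> ws, x \<leftarrow> xs])"
proof -
  have mtens_zero: "mtens Y 0 = 0" "mtens 0 X = 0" for X Y
    by (simp_all add: vec_eq_iff mtens_def)
  have mtens_add_left: "mtens (A + B) X = mtens A X + mtens B X" for A B X
    by (simp add: vec_eq_iff mtens_def algebra_simps)
  have mtens_add_right: "mtens Y (A + B) = mtens Y A + mtens Y B" for A B Y
    by (simp add: vec_eq_iff mtens_def algebra_simps)
  have row: "mtens (vouter w) (outer_sum xs) = outer_sum (map prod_vec [(x, cconj_vec w). x \<leftarrow> xs])"
    for w by (induction xs) (simp_all add: mtens_zero mtens_add_right mtens_vouter prod_vec_def)
  show ?thesis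
    by (induction ws) (simp_all add: row mtens_zero mtens_add_left outer_sum_append)
qed

lemma sep_cone_iff_outer_sum_prod_vec:
  "A \<in> sep_cone \<longleftrightarrow> (\<exists>L. A = outer_sum (map prod_vec L))"
proof
  assume "A \<in> sep_cone"
  then obtain r :: nat and Y X where psd: "\<forall>p<r. psd (Y p) \<and> psd (X p)"
    and A: "A = (\<Sum>p<r. mtens (Y p) (X p))"
    unfolding sep_cone_def by blast
  have "\<exists>L. (\<Sum>p<k. mtens (Y p) (X p)) = outer_sum (map prod_vec L)" if "k \<le> r" for k
    using that
  proof (induction k)
    case 0
    have "(\<Sum>p<0. mtens (Y p) (X p)) = outer_sum (map prod_vec [])"
      by simp
    then show ?case ..
  next
    case (Suc k)
    then obtain L where L: "(\<Sum>p<k. mtens (Y p) (X p)) = outer_sum (map prod_vec L)"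
      by auto
    obtain ws xs where "Y k = outer_sum ws" "X k = outer_sum xs"
      using psd_eq_outer_sum psd Suc.prems by (metis Suc_le_lessD)
    then show ?case
      using L by (auto simp: mtens_outer_sum outer_sum_append intro!: exI[of _ "L @ _"])
  qed
  then show "\<exists>L. A = outer_sum (map prod_vec L)"
    using A by blast
next
  assume "\<exists>L. A = outer_sum (map prod_vec L)"
  then obtain L where "A = outer_sum (map prod_vec L)" ..
  also have "outer_sum (map prod_vec L) = (\<Sum>p<length L. vouter (prod_vec (L!p)))"
    unfolding outer_sum_def sum_list_sum_nth by (simp add: atLeast0LessThan)
  finally have "A = (\<Sum>p<length L. mtens (vouter (cconj_vec (snd (L!p)))) (vouter (fst (L!p))))"
    by (simp only: mtens_vouter prod_vec_def)
  then show "A \<in> sep_cone"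
    unfolding sep_cone_def
    by (intro CollectI exI[of _ "length L"] exI[of _ "\<lambda>p. vouter (cconj_vec (snd (L!p)))"]
        exI[of _ "\<lambda>p. vouter (fst (L!p))"]) (simp add: psd_vouter)
qed

lemma ptrans_ptrans [simp]: "ptrans (ptrans A) = A"
  by (simp add: vec_eq_iff ptrans_def)

lemma ptrans_outer_sum_prod_vec:
  "ptrans (outer_sum (map prod_vec L)) = outer_sum (map (cconj_vec \<circ> pconj_vec) L)"
proof -
  have ptrans_add: "ptrans (A + B) = ptrans A + ptrans B" for A B
    by (simp add: vec_eq_iff ptrans_def)
  have rank_one: "ptrans (vouter (prod_vec p)) = vouter (cconj_vec (pconj_vec p))" for p
    by (simp add: vec_eq_iff ptrans_def vouter_def vtens_def cconj_vec_def prod_vec_def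
        pconj_vec_def ac_simps)
  have zero: "ptrans 0 = 0"
    by (simp add: vec_eq_iff ptrans_def)
  show ?thesis
    by (induction L) (simp_all add: ptrans_add rank_one zero)
qed

lemma pairing_add: "pairing (A + B) \<phi> = pairing A \<phi> + pairing B \<phi>"
  by (simp add: pairing_def sum.distrib algebra_simps)

lemma clinear_map_sum:
  assumes "clinear_map \<phi>"
  shows "\<phi> (sum f S) = (\<Sum>a\<in>S. \<phi> (f a))"
proof -
  have "\<phi> 0 = 0"
    using assms[unfolded clinear_map_def] by (metis add_cancel_right_right add_0)
  with assms show ?thesis
    by (induction S rule: infinite_finite_induct) (auto simp: clinear_map_def)
qed

lemma mat_unit_expansion: "X = (\<Sum>k\<in>UNIV. \<Sum>l\<in>UNIV. mscale (X$k$l) (mat_unit k l))"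
proof -
  have "(\<Sum>k\<in>UNIV. \<Sum>l\<in>UNIV. X$k$l * (if i = k \<and> j = l then 1 else 0)) = X$i$j" for i j
  proof -
    have "(\<Sum>l\<in>UNIV. X$k$l * (if i = k \<and> j = l then 1 else 0)) = (if k = i then X$k$j else 0)" for k
      by (cases "k = i") (simp_all add: if_distrib eq_commute[of j] cong: if_cong)
    then show ?thesis
      by simp
  qed
  then show ?thesis
    by (simp add: vec_eq_iff mscale_def mat_unit_def)
qed

lemma clinear_map_entry:
  assumes "clinear_map \<phi>"
  shows "\<phi> X $ i $ j = (\<Sum>k\<in>UNIV. \<Sum>l\<in>UNIV. X$k$l * \<phi> (mat_unit k l) $ i $ j)"
proof -
  have "\<phi> X = (\<Sum>k\<in>UNIV. \<Sum>l\<in>UNIV. mscale (X$k$l) (\<phi> (mat_unit k l)))"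
    by (subst mat_unit_expansion[of X]) (use assms in \<open>simp add: clinear_map_sum clinear_map_def\<close>)
  then show ?thesis
    by (simp add: mscale_def)
qed

lemma pairing_vouter_prod_vec:
  assumes "clinear_map \<phi>"
  shows "pairing (vouter (prod_vec p)) \<phi> = cip (\<phi> (vouter (fst p)) *v snd p) (snd p)"
proof -
  define x y where "x = fst p" and "y = snd p"
  have entry: "vouter (prod_vec p) $ (i,k) $ (j,l) = cnj (y$i) * y$j * (x$k * cnj (x$l))" for i j k l
    by (simp add: x_def y_def prod_vec_def vouter_def vtens_def cconj_vec_def)
  have "\<phi> (vouter x) $ i $ j = (\<Sum>k\<in>UNIV. \<Sum>l\<in>UNIV. x$k * cnj (x$l) * \<phi> (mat_unit k l) $ i $ j)"
    for i j by (rule trans[OF clinear_map_entry[OF assms]]) (simp add: vouter_def)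
  then have "cip (\<phi> (vouter x) *v y) y = (\<Sum>i\<in>UNIV. (\<Sum>j\<in>UNIV.
      (\<Sum>k\<in>UNIV. \<Sum>l\<in>UNIV. x$k * cnj (x$l) * \<phi> (mat_unit k l) $ i $ j) * y$j) * cnj (y$i))"
    unfolding cip_def matrix_vector_mult_def by simp
  also have "\<dots> = (\<Sum>i\<in>UNIV. \<Sum>j\<in>UNIV. \<Sum>k\<in>UNIV. \<Sum>l\<in>UNIV.
      cnj (y$i) * y$j * (x$k * cnj (x$l)) * \<phi> (mat_unit k l) $ i $ j)"
    by (simp add: sum_distrib_left sum_distrib_right mult.commute mult.left_commute)
  also have "\<dots> = pairing (vouter (prod_vec p)) \<phi>"
    unfolding pairing_def entry ..
  finally show ?thesis
    by (simp add: x_def y_def)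
qed

lemma pairing_outer_sum_prod_vec:
  assumes "clinear_map \<phi>"
  shows "pairing (outer_sum (map prod_vec L)) \<phi> = (\<Sum>p\<leftarrow>L. cip (\<phi> (vouter (fst p)) *v snd p) (snd p))"
  by (induction L) (simp_all add: pairing_add pairing_vouter_prod_vec[OF assms], simp add: pairing_def)

lemma positive_map_form_nonneg: "positive_map \<phi> \<Longrightarrow> 0 \<le> cip (\<phi> (vouter x) *v y) y"
  unfolding positive_map_def using psd_vouter psd_form_nonneg by blast

lemma dual_face_iff_outer_sum_prod_vec:
  assumes "positive_map \<phi>"
  shows "A \<in> dual_face \<phi> \<longleftrightarrow> (\<exists>L. set L \<subseteq> vanishing_pairs \<phi> \<and> A = outer_sum (map prod_vec L))"
proof -
  have "pairing (outer_sum (map prod_vec L)) \<phi> = 0 \<longleftrightarrow> set L \<subseteq> vanishing_pairs \<phi>" for L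
    using assms unfolding pairing_outer_sum_prod_vec[OF assms[unfolded positive_map_def, THEN conjunct1]]
    by (subst sum_list_nonneg_eq_0_iff) (auto simp: positive_map_form_nonneg vanishing_pairs_def)
  then show ?thesis
    unfolding dual_face_def sep_cone_iff_outer_sum_prod_vec by blast
qed

lemma outer_sum_prod_vec_in_ppt_interior_iff:
  "outer_sum (map prod_vec L) \<in> ppt_interior \<longleftrightarrow>
     vec.span (prod_vec ` set L) = UNIV \<and> vec.span (pconj_vec ` set L) = UNIV"
proof -
  have "vec.span (set (map (cconj_vec \<circ> pconj_vec) L)) = UNIV \<longleftrightarrow> vec.span (pconj_vec ` set L) = UNIV"
    using span_cconj_vec_eq_UNIV_iff[of "pconj_vec ` set L"] by (simp add: image_comp)
  then show ?thesis
    by (simp add: ppt_interior_def ppt_cone_def ptrans_outer_sum_prod_vec psd_outer_sum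
        full_range_outer_sum_iff)
qed

lemma dual_face_meets_ppt_interior_iff:
  assumes "positive_map \<phi>"
  shows "(\<exists>A\<in>dual_face \<phi>. A \<in> ppt_interior) \<longleftrightarrow>
     vec.span (prod_vecs \<phi>) = UNIV \<and> vec.span (prod_vecs_pconj \<phi>) = UNIV"
proof
  assume "\<exists>A\<in>dual_face \<phi>. A \<in> ppt_interior"
  then obtain L where L: "set L \<subseteq> vanishing_pairs \<phi>"
    and "vec.span (prod_vec ` set L) = UNIV" "vec.span (pconj_vec ` set L) = UNIV"
    using dual_face_iff_outer_sum_prod_vec[OF assms] outer_sum_prod_vec_in_ppt_interior_iff by metis
  moreover have "vec.span (prod_vec ` set L) \<subseteq> vec.span (prod_vecs \<phi>)"
    "vec.span (pconj_vec ` set L) \<subseteq> vec.span (prod_vecs_pconj \<phi>)"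
    unfolding prod_vecs_eq_image prod_vecs_pconj_eq_image using L by (simp_all add: vec.span_mono image_mono)
  ultimately show "vec.span (prod_vecs \<phi>) = UNIV \<and> vec.span (prod_vecs_pconj \<phi>) = UNIV"
    by auto
next
  assume span: "vec.span (prod_vecs \<phi>) = UNIV \<and> vec.span (prod_vecs_pconj \<phi>) = UNIV"
  obtain C1 where C1: "finite C1" "C1 \<subseteq> vanishing_pairs \<phi>"
    "vec.span (prod_vec ` C1) = vec.span (prod_vecs \<phi>)"
    unfolding prod_vecs_eq_image by (rule finite_spanning_subimage)
  obtain C2 where C2: "finite C2" "C2 \<subseteq> vanishing_pairs \<phi>"
    "vec.span (pconj_vec ` C2) = vec.span (prod_vecs_pconj \<phi>)"
    unfolding prod_vecs_pconj_eq_image by (rule finite_spanning_subimage)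
  obtain L where L: "set L = C1 \<union> C2"
    using finite_list C1(1) C2(1) by (meson finite_UnI)
  have "vec.span (prod_vec ` C1) \<subseteq> vec.span (prod_vec ` set L)"
    "vec.span (pconj_vec ` C2) \<subseteq> vec.span (pconj_vec ` set L)"
    unfolding L by (simp_all add: vec.span_mono image_mono)
  then have "outer_sum (map prod_vec L) \<in> ppt_interior"
    unfolding outer_sum_prod_vec_in_ppt_interior_iff using span C1(3) C2(3) by auto
  moreover have "outer_sum (map prod_vec L) \<in> dual_face \<phi>"
    unfolding dual_face_iff_outer_sum_prod_vec[OF assms] using L C1(2) C2(2) by auto
  ultimately show "\<exists>A\<in>dual_face \<phi>. A \<in> ppt_interior"
    by blast
qed

section \<open>Decomposable maps\<close>

definition vecmat :: "complex^'n::finite^'m::finite \<Rightarrow> complex^('n \<times> 'm)" where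
  "vecmat V = (\<chi> p. V $ snd p $ fst p)"

lemma vecmat_eq_0_iff: "vecmat V = 0 \<longleftrightarrow> V = 0"
  by (auto simp: vecmat_def vec_eq_iff)

lemma vecmat_surj: "vecmat (\<chi> l j. z $ (j, l)) = z"
  by (simp add: vecmat_def vec_eq_iff)

lemma sum_UNIV_pair:
  "(\<Sum>p\<in>UNIV. f p) = (\<Sum>i\<in>UNIV. \<Sum>k\<in>UNIV. f (i, k))"
  for f :: "'a::finite \<times> 'b::finite \<Rightarrow> 'c::comm_monoid_add"
  by (simp add: UNIV_Times_UNIV[symmetric] sum.cartesian_product del: UNIV_Times_UNIV)

lemma sandwich_mat_unit:
  "(cadj V ** mat_unit k l ** (V::complex^'n::finite^'m::finite))$i$j = cnj (V$k$i) * V$l$j"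
proof -
  have "(cadj V ** mat_unit k l ** V)$i$j =
      (\<Sum>b\<in>UNIV. (\<Sum>a\<in>UNIV. cnj (V$a$i) * (if a = k \<and> b = l then 1 else 0)) * V$b$j)"
    by (simp add: matrix_matrix_mult_def cadj_def mat_unit_def)
  also have "\<dots> = (\<Sum>b\<in>UNIV. if b = l then cnj (V$k$i) * V$b$j else 0)"
    by (rule sum.cong) (auto simp: if_distrib cong: if_cong)
  finally show ?thesis
    by simp
qed

lemma pairing_sandwich:
  fixes V :: "complex^'n::finite^'m::finite" and A :: "complex^('n \<times> 'm)^('n \<times> 'm)"
  shows "pairing A (\<lambda>X. cadj V ** X ** V) = cip (A *v vecmat V) (vecmat V)"
proof -
  have "cip (A *v vecmat V) (vecmat V)
      = (\<Sum>i\<in>UNIV. \<Sum>k\<in>UNIV. \<Sum>j\<in>UNIV. \<Sum>l\<in>UNIV. A$(i,k)$(j,l) * (cnj (V$k$i) * V$l$j))"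
    by (simp add: vecmat_def cip_def matrix_vector_mult_def sum_UNIV_pair sum_distrib_right
        sum_distrib_left ac_simps)
  also have "\<dots> = (\<Sum>i\<in>UNIV. \<Sum>j\<in>UNIV. \<Sum>k\<in>UNIV. \<Sum>l\<in>UNIV. A$(i,k)$(j,l) * (cnj (V$k$i) * V$l$j))"
    by (rule sum.cong[OF refl], rule sum.swap)
  finally show ?thesis
    by (simp add: pairing_def sandwich_mat_unit)
qed

lemma pairing_transpose_sandwich:
  fixes W :: "complex^'n::finite^'m::finite" and A :: "complex^('n \<times> 'm)^('n \<times> 'm)"
  shows "pairing A (\<lambda>X. cadj W ** transpose X ** W) =
    cip (ptrans A *v cconj_vec (vecmat W)) (cconj_vec (vecmat W))"
proof -
  have "transpose (mat_unit k l) = mat_unit l k" for k l :: 'm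
    by (auto simp: vec_eq_iff transpose_def mat_unit_def)
  then have unit: "(cadj W ** transpose (mat_unit k l) ** W)$i$j = cnj (W$l$i) * W$k$j" for k l i j
    by (simp add: sandwich_mat_unit)
  have "cip (ptrans A *v cconj_vec (vecmat W)) (cconj_vec (vecmat W))
      = (\<Sum>j\<in>UNIV. \<Sum>k\<in>UNIV. \<Sum>i\<in>UNIV. \<Sum>l\<in>UNIV. A$(i,k)$(j,l) * (cnj (W$l$i) * W$k$j))"
    by (simp add: vecmat_def cconj_vec_def cip_def ptrans_def matrix_vector_mult_def sum_UNIV_pair
        sum_distrib_right sum_distrib_left ac_simps)
  also have "\<dots> = (\<Sum>j\<in>UNIV. \<Sum>i\<in>UNIV. \<Sum>k\<in>UNIV. \<Sum>l\<in>UNIV. A$(i,k)$(j,l) * (cnj (W$l$i) * W$k$j))"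
    by (rule sum.cong[OF refl], rule sum.swap)
  also have "\<dots> = (\<Sum>i\<in>UNIV. \<Sum>j\<in>UNIV. \<Sum>k\<in>UNIV. \<Sum>l\<in>UNIV. A$(i,k)$(j,l) * (cnj (W$l$i) * W$k$j))"
    by (rule sum.swap)
  finally show ?thesis
    by (simp add: pairing_def unit)
qed

lemma pairing_map_add: "pairing A (\<lambda>X. \<phi> X + \<psi> X) = pairing A \<phi> + pairing A \<psi>"
  by (simp add: pairing_def sum.distrib algebra_simps)

lemma pairing_map_sum: "pairing A (\<lambda>X. \<Sum>p\<in>S. f p X) = (\<Sum>p\<in>S. pairing A (f p))"
proof (induction S rule: infinite_finite_induct)
  case (insert p S)
  then show ?case
    by (simp add: pairing_map_add)
qed (simp_all add: pairing_def)

lemma pairing_zero_map: "pairing A (\<lambda>X. 0) = 0"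
  by (simp add: pairing_def)

lemma cip_cadj_mult_vec: "cip (cadj V *v u) y = cip u (V *v y)"
proof -
  have "cip (cadj V *v u) y = (\<Sum>i\<in>UNIV. \<Sum>j\<in>UNIV. cnj (V$j$i) * u$j * cnj (y$i))"
    by (simp add: cip_def cadj_def matrix_vector_mult_def sum_distrib_right)
  also have "\<dots> = (\<Sum>j\<in>UNIV. \<Sum>i\<in>UNIV. cnj (V$j$i) * u$j * cnj (y$i))"
    by (rule sum.swap)
  also have "\<dots> = cip u (V *v y)"
    by (simp add: cip_def matrix_vector_mult_def sum_distrib_left ac_simps)
  finally show ?thesis .
qed

lemma mscale_matrix_mult_left: "mscale c A ** B = mscale c (A ** B)"
  by (simp add: vec_eq_iff mscale_def matrix_matrix_mult_def sum_distrib_left mult.assoc)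

lemma mscale_matrix_mult_right: "A ** mscale c B = mscale c (A ** B)"
  by (simp add: vec_eq_iff mscale_def matrix_matrix_mult_def sum_distrib_left mult.left_commute)

lemma positive_map_sandwich_comp:
  fixes F :: "complex^'k::finite^'k \<Rightarrow> complex^'m::finite^'m"
  assumes "clinear_map F" and "\<And>X. psd X \<Longrightarrow> psd (F X)"
  shows "positive_map (\<lambda>X. cadj V ** F X ** (V::complex^'n::finite^'m))"
  unfolding positive_map_def clinear_map_def
proof (intro conjI allI impI)
  fix X Y :: "complex^'k^'k"
  have "(B + C) ** A = B ** A + C ** A" for B C :: "complex^'m^'n" and A :: "complex^'n^'m"
    by (simp add: vec_eq_iff matrix_matrix_mult_def sum.distrib distrib_right)
  then show "cadj V ** F (X + Y) ** V = cadj V ** F X ** V + cadj V ** F Y ** V"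
    using assms(1) by (simp add: clinear_map_def matrix_add_ldistrib)
next
  fix c and X :: "complex^'k^'k"
  show "cadj V ** F (mscale c X) ** V = mscale c (cadj V ** F X ** V)"
    using assms(1) by (simp add: clinear_map_def mscale_matrix_mult_left mscale_matrix_mult_right)
next
  fix X :: "complex^'k^'k"
  assume "psd X"
  then show "psd (cadj V ** F X ** V)"
    using assms(2) unfolding psd_def by (simp add: matrix_vector_mul_assoc[symmetric] cip_cadj_mult_vec)
qed

lemma positive_map_sandwich: "positive_map (\<lambda>X. cadj V ** X ** (V::complex^'n::finite^'m::finite))"
  using positive_map_sandwich_comp[of "\<lambda>X. X"] by (simp add: clinear_map_def)

lemma positive_map_transpose_sandwich:
  "positive_map (\<lambda>X. cadj V ** transpose X ** (V::complex^'n::finite^'m::finite))"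
proof (rule positive_map_sandwich_comp)
  show "clinear_map (transpose :: complex^'m^'m \<Rightarrow> _)"
    by (simp add: clinear_map_def vec_eq_iff transpose_def mscale_def)
qed (rule psd_transpose)

lemma mscale_sandwich:
  "mscale (of_real (c * c)) (cadj V ** M ** V) = cadj (mscale (of_real c) V) ** M ** mscale (of_real c) V"
proof -
  have "cadj (mscale (of_real c) V) = mscale (of_real c) (cadj V)"
    by (simp add: vec_eq_iff cadj_def mscale_def)
  then show ?thesis
    by (simp add: mscale_matrix_mult_left mscale_matrix_mult_right, simp add: vec_eq_iff mscale_def)
qed

lemma decomposable_pairing_ppt_interior_eq_0_imp_zero:
  fixes \<phi> :: "complex^'m::finite^'m \<Rightarrow> complex^'n::finite^'n"
  assumes "decomposable \<phi>" and "A \<in> ppt_interior" and "pairing A \<phi> = 0"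
  shows "\<phi> = (\<lambda>X. 0)"
proof -
  obtain r s :: nat and V W :: "nat \<Rightarrow> complex^'n^'m" where
    \<phi>: "\<phi> = (\<lambda>X. (\<Sum>p<r. cadj (V p) ** X ** V p) + (\<Sum>q<s. cadj (W q) ** transpose X ** W q))"
    using assms(1) unfolding decomposable_def by blast
  define w where "w q = cconj_vec (vecmat (W q))" for q
  have psd: "psd A" "psd (ptrans A)" and full: "full_range A" "full_range (ptrans A)"
    using assms(2) unfolding ppt_interior_def ppt_cone_def by auto
  have "(\<Sum>p<r. cip (A *v vecmat (V p)) (vecmat (V p))) + (\<Sum>q<s. cip (ptrans A *v w q) (w q)) = 0"
    using assms(3) unfolding \<phi> pairing_map_add pairing_map_sum pairing_sandwich
      pairing_transpose_sandwich w_def .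
  moreover have nonneg: "0 \<le> cip (A *v vecmat (V p)) (vecmat (V p))" "0 \<le> cip (ptrans A *v w q) (w q)"
    for p q by (simp_all add: psd psd_form_nonneg)
  ultimately have "(\<Sum>p<r. cip (A *v vecmat (V p)) (vecmat (V p))) = 0"
    "(\<Sum>q<s. cip (ptrans A *v w q) (w q)) = 0"
    by (simp_all only: add_nonneg_eq_0_iff sum_nonneg nonneg)
  then have "\<And>p. p < r \<Longrightarrow> cip (A *v vecmat (V p)) (vecmat (V p)) = 0"
    "\<And>q. q < s \<Longrightarrow> cip (ptrans A *v w q) (w q) = 0"
    by (simp_all add: sum_nonneg_eq_0_iff nonneg)
  then have "\<And>p. p < r \<Longrightarrow> A *v vecmat (V p) = 0" "\<And>q. q < s \<Longrightarrow> ptrans A *v w q = 0"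
    by (simp_all add: psd psd_form_eq_0_imp_kernel)
  then have "\<And>p. p < r \<Longrightarrow> V p = 0" "\<And>q. q < s \<Longrightarrow> W q = 0"
    using full_range_imp_kernel_eq_0[OF full(1)] full_range_imp_kernel_eq_0[OF full(2)]
    by (metis vecmat_eq_0_iff, metis w_def cconj_vec_eq_0_iff vecmat_eq_0_iff)
  then show ?thesis
    unfolding \<phi> by (intro ext) simp
qed

lemma exposed_dual_face_maps_imp_multiple:
  assumes "exposed \<phi>" and "\<psi> \<in> dual_face_maps (dual_face \<phi>)" and "\<psi> \<noteq> (\<lambda>X. 0)"
  obtains t where "t > 0" "\<phi> = (\<lambda>X. mscale (of_real t) (\<psi> X))"
proof -
  obtain s where s: "\<psi> = (\<lambda>X. mscale (of_real s) (\<phi> X))" "s \<ge> 0"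
    using assms(1,2) unfolding exposed_def ray_def by blast
  then have "s \<noteq> 0"
    using assms(3) by (auto simp: mscale_def vec_eq_iff fun_eq_iff)
  then have "\<phi> = (\<lambda>X. mscale (of_real (1 / s)) (\<psi> X))"
    by (simp add: s(1) mscale_def vec_eq_iff fun_eq_iff)
  then show ?thesis
    using s(2) \<open>s \<noteq> 0\<close> by (intro that[of "1 / s"]) auto
qed

lemma dual_face_form_eq_0:
  assumes "positive_map \<phi>" and "A \<in> dual_face \<phi>" and "\<And>u. u \<in> prod_vecs \<phi> \<Longrightarrow> cip u z = 0"
  shows "cip (A *v z) z = 0"
proof -
  obtain L where L: "set L \<subseteq> vanishing_pairs \<phi>" "A = outer_sum (map prod_vec L)"
    using assms(1,2) dual_face_iff_outer_sum_prod_vec by blast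
  have "cip z (prod_vec p) = 0" if "p \<in> set L" for p
    using assms(3)[of "prod_vec p"] L(1) that cnj_cip[of "prod_vec p" z]
    by (auto simp: prod_vecs_eq_image)
  then show ?thesis
    unfolding L(2) outer_sum_form_eq_0_iff by simp
qed

lemma dual_face_ptrans_form_eq_0:
  assumes "positive_map \<phi>" and "A \<in> dual_face \<phi>"
    and "\<And>u. u \<in> prod_vecs_pconj \<phi> \<Longrightarrow> cip u z = 0"
  shows "cip (ptrans A *v cconj_vec z) (cconj_vec z) = 0"
proof -
  obtain L where L: "set L \<subseteq> vanishing_pairs \<phi>" "A = outer_sum (map prod_vec L)"
    using assms(1,2) dual_face_iff_outer_sum_prod_vec by blast
  have "cip (cconj_vec z) (cconj_vec (pconj_vec p)) = 0" if "p \<in> set L" for p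
    using assms(3)[of "pconj_vec p"] L(1) that
    by (auto simp: prod_vecs_pconj_eq_image cip_cconj_vec)
  then show ?thesis
    unfolding L(2) ptrans_outer_sum_prod_vec outer_sum_form_eq_0_iff by simp
qed

lemma exposed_orthogonal_prod_vecs_imp_decomposable:
  fixes \<phi> :: "complex^'m::finite^'m \<Rightarrow> complex^'n::finite^'n"
  assumes pos: "positive_map \<phi>" and exp: "exposed \<phi>"
    and "z \<noteq> 0" and orth: "\<And>u. u \<in> prod_vecs \<phi> \<Longrightarrow> cip u z = 0"
  shows "decomposable \<phi>"
proof -
  define V :: "complex^'n^'m" where "V = (\<chi> l j. z $ (j, l))"
  define \<psi> where "\<psi> = (\<lambda>X. cadj V ** X ** V)"
  have pairing: "pairing A \<psi> = cip (A *v z) z" for A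
    unfolding \<psi>_def pairing_sandwich V_def vecmat_surj ..
  have "\<psi> \<in> dual_face_maps (dual_face \<phi>)"
    unfolding dual_face_maps_def
  proof (intro CollectI conjI ballI)
    show "positive_map \<psi>"
      unfolding \<psi>_def by (rule positive_map_sandwich)
    show "pairing A \<psi> = 0" if "A \<in> dual_face \<phi>" for A
      unfolding pairing using dual_face_form_eq_0[OF pos that orth] .
  qed
  moreover have "\<psi> \<noteq> (\<lambda>X. 0)"
  proof
    assume "\<psi> = (\<lambda>X. 0)"
    then have "pairing (vouter z) \<psi> = 0"
      by (simp add: pairing_zero_map)
    then show False
      using vouter_form_self_neq_0[OF \<open>z \<noteq> 0\<close>] by (simp add: pairing)
  qed
  ultimately obtain t where "t > 0" "\<phi> = (\<lambda>X. mscale (of_real t) (\<psi> X))"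
    using exposed_dual_face_maps_imp_multiple[OF exp] by blast
  then have "\<phi> = (\<lambda>X. cadj (mscale (of_real (sqrt t)) V) ** X ** mscale (of_real (sqrt t)) V)"
    unfolding \<psi>_def mscale_sandwich[symmetric] by simp
  then show ?thesis
    unfolding decomposable_def
    by (intro exI[of _ 1] exI[of _ 0] exI[of _ "\<lambda>_. mscale (of_real (sqrt t)) V"]) simp
qed

lemma exposed_orthogonal_prod_vecs_pconj_imp_decomposable:
  fixes \<phi> :: "complex^'m::finite^'m \<Rightarrow> complex^'n::finite^'n"
  assumes pos: "positive_map \<phi>" and exp: "exposed \<phi>"
    and "z \<noteq> 0" and orth: "\<And>u. u \<in> prod_vecs_pconj \<phi> \<Longrightarrow> cip u z = 0"
  shows "decomposable \<phi>"
proof -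
  define W :: "complex^'n^'m" where "W = (\<chi> l j. z $ (j, l))"
  define \<psi> where "\<psi> = (\<lambda>X. cadj W ** transpose X ** W)"
  have pairing: "pairing A \<psi> = cip (ptrans A *v cconj_vec z) (cconj_vec z)" for A
    unfolding \<psi>_def pairing_transpose_sandwich W_def vecmat_surj ..
  have "\<psi> \<in> dual_face_maps (dual_face \<phi>)"
    unfolding dual_face_maps_def
  proof (intro CollectI conjI ballI)
    show "positive_map \<psi>"
      unfolding \<psi>_def by (rule positive_map_transpose_sandwich)
    show "pairing A \<psi> = 0" if "A \<in> dual_face \<phi>" for A
      unfolding pairing using dual_face_ptrans_form_eq_0[OF pos that orth] .
  qed
  moreover have "\<psi> \<noteq> (\<lambda>X. 0)"
  proof
    assume "\<psi> = (\<lambda>X. 0)"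
    then have "pairing (ptrans (vouter (cconj_vec z))) \<psi> = 0"
      by (simp add: pairing_zero_map)
    then show False
      using vouter_form_self_neq_0[of "cconj_vec z"] \<open>z \<noteq> 0\<close> by (simp add: pairing)
  qed
  ultimately obtain t where "t > 0" "\<phi> = (\<lambda>X. mscale (of_real t) (\<psi> X))"
    using exposed_dual_face_maps_imp_multiple[OF exp] by blast
  then have "\<phi> = (\<lambda>X. cadj (mscale (of_real (sqrt t)) W) ** transpose X ** mscale (of_real (sqrt t)) W)"
    unfolding \<psi>_def mscale_sandwich[symmetric] by simp
  then show ?thesis
    unfolding decomposable_def
    by (intro exI[of _ 0] exI[of _ 1] exI[of _ W] exI[of _ "\<lambda>_. mscale (of_real (sqrt t)) W"]) simp
qed

lemma exposed_not_spanning_imp_decomposable: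
  fixes \<phi> :: "complex^'m::finite^'m \<Rightarrow> complex^'n::finite^'n"
  assumes "positive_map \<phi>" and "exposed \<phi>"
    and "\<not> (vec.span (prod_vecs \<phi>) = UNIV \<and> vec.span (prod_vecs_pconj \<phi>) = UNIV)"
  shows "decomposable \<phi>"
proof (cases "vec.span (prod_vecs \<phi>) = UNIV")
  case True
  then obtain z where "z \<noteq> 0" "\<And>u. u \<in> prod_vecs_pconj \<phi> \<Longrightarrow> cip u z = 0"
    using assms(3) orthogonal_vector_exists[of "prod_vecs_pconj \<phi>"] by blast
  then show ?thesis
    using exposed_orthogonal_prod_vecs_pconj_imp_decomposable assms(1,2) by blast
next
  case False
  then obtain z where "z \<noteq> 0" "\<And>u. u \<in> prod_vecs \<phi> \<Longrightarrow> cip u z = 0"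
    using orthogonal_vector_exists[of "prod_vecs \<phi>"] by blast
  then show ?thesis
    using exposed_orthogonal_prod_vecs_imp_decomposable assms(1,2) by blast
qed

theorem proposition3p1:
  fixes \<phi> :: "complex^'m::finite^'m \<Rightarrow> complex^'n::finite^'n"
  assumes "positive_map \<phi>"
  shows "((\<exists>A\<in>dual_face \<phi>. A \<in> ppt_interior) \<longleftrightarrow>
            (vec.span (prod_vecs \<phi>) = UNIV \<and> vec.span (prod_vecs_pconj \<phi>) = UNIV))
       \<and> (exposed \<phi> \<and> \<phi> \<noteq> (\<lambda>X. 0) \<longrightarrow>
            ((\<exists>A\<in>dual_face \<phi>. A \<in> ppt_interior) \<longleftrightarrow> \<not> decomposable \<phi>))"
proof (intro conjI impI)
  show spanning: "(\<exists>A\<in>dual_face \<phi>. A \<in> ppt_interior) \<longleftrightarrow>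
      (vec.span (prod_vecs \<phi>) = UNIV \<and> vec.span (prod_vecs_pconj \<phi>) = UNIV)"
    by (rule dual_face_meets_ppt_interior_iff[OF assms])
  assume "exposed \<phi> \<and> \<phi> \<noteq> (\<lambda>X. 0)"
  moreover have "\<not> decomposable \<phi>" if "A \<in> dual_face \<phi>" "A \<in> ppt_interior" "\<phi> \<noteq> (\<lambda>X. 0)" for A
    using that decomposable_pairing_ppt_interior_eq_0_imp_zero by (auto simp: dual_face_def)
  ultimately show "(\<exists>A\<in>dual_face \<phi>. A \<in> ppt_interior) \<longleftrightarrow> \<not> decomposable \<phi>"
    using spanning exposed_not_spanning_imp_decomposable[OF assms] by blast
qed

end
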